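(* For all integers $n\ge 3$ and $1<k<n$, the vertex connectivity of $G=H_B(n,k)$ is $\kappa(G)=1$.
   Context: Fix integers $n\ge 2$ and $1\le k<n$ and positive real numbers $x_1<x_2<\dots<x_n$. Let $\mathscr{B}_n=\{\pm x_1,\pm x_2,\dots,\pm x_{n-1},x_n\}$ (so $-x_n\notin\mathscr{B}_n$). Let $\phi(\mathscr{B}_n)$ be the family of all nonempty subsets $S\subseteq\mathscr{B}_n$ whose elements have pairwise distinct absolute values and whose element of largest absolute value is positive. Let $\mathscr{B}_n^+=\{x_1,\dots,x_n\}$, let $V_1$ be the set of all $k$-element subsets of $\mathscr{B}_n^+$, and let $V_2=\phi(\mathscr{B}_n)\setminus V_1$. For $A\in\phi(\mathscr{B}_n)$ put $A^\dagger=\{|a|:a\in A\}$. The bipartite Kneser B type-$k$ graph $H_B(n,k)$ is the simple graph with vertex set $V_1\cup V_2$ in which $X\in V_1$ and $Y\in V_2$ are adjacent if and only if $X\subseteq Y^\dagger$ or $Y^\dagger\subseteq X$, and there are no other edges. *)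

theory Defs
  imports Complex_Main
begin

text \<open>Generic simple-graph notions: a graph is a vertex set V with a symmetric
adjacency predicate E (only edges between vertices of V matter).\<close>

definition graph_connected :: "'a set \<Rightarrow> ('a \<Rightarrow> 'a \<Rightarrow> bool) \<Rightarrow> bool" where
  "graph_connected V E \<longleftrightarrow>
     (\<forall>u\<in>V. \<forall>v\<in>V. (\<lambda>a b. a \<in> V \<and> b \<in> V \<and> E a b)\<^sup>*\<^sup>* u v)"

definition vertex_connectivity :: "'a set \<Rightarrow> ('a \<Rightarrow> 'a \<Rightarrow> bool) \<Rightarrow> nat" where
  "vertex_connectivity V E =
     (LEAST m. \<exists>S. S \<subseteq> V \<and> card S = m \<and>
                  (\<not> graph_connected (V - S) E \<or> card (V - S) \<le> 1))"

definition B_set :: "nat \<Rightarrow> (nat \<Rightarrow> real) \<Rightarrow> real set" where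
  "B_set n x = {x i | i. 1 \<le> i \<and> i \<le> n} \<union> {- x i | i. 1 \<le> i \<and> i \<le> n - 1}"

definition B_plus :: "nat \<Rightarrow> (nat \<Rightarrow> real) \<Rightarrow> real set" where
  "B_plus n x = {x i | i. 1 \<le> i \<and> i \<le> n}"

definition phi_B :: "nat \<Rightarrow> (nat \<Rightarrow> real) \<Rightarrow> real set set" where
  "phi_B n x = {S. S \<noteq> {} \<and> S \<subseteq> B_set n x \<and> inj_on abs S \<and>
                   (\<exists>a\<in>S. a > 0 \<and> (\<forall>b\<in>S. \<bar>b\<bar> \<le> \<bar>a\<bar>))}"

definition HB_V1 :: "nat \<Rightarrow> nat \<Rightarrow> (nat \<Rightarrow> real) \<Rightarrow> real set set" where
  "HB_V1 n k x = {X. X \<subseteq> B_plus n x \<and> card X = k}"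

definition HB_V2 :: "nat \<Rightarrow> nat \<Rightarrow> (nat \<Rightarrow> real) \<Rightarrow> real set set" where
  "HB_V2 n k x = phi_B n x - HB_V1 n k x"

definition HB_vertices :: "nat \<Rightarrow> nat \<Rightarrow> (nat \<Rightarrow> real) \<Rightarrow> real set set" where
  "HB_vertices n k x = HB_V1 n k x \<union> HB_V2 n k x"

definition HB_adj :: "nat \<Rightarrow> nat \<Rightarrow> (nat \<Rightarrow> real) \<Rightarrow> real set \<Rightarrow> real set \<Rightarrow> bool" where
  "HB_adj n k x X Y \<longleftrightarrow>
     (X \<in> HB_V1 n k x \<and> Y \<in> HB_V2 n k x \<and> (X \<subseteq> abs ` Y \<or> abs ` Y \<subseteq> X)) \<or>
     (Y \<in> HB_V1 n k x \<and> X \<in> HB_V2 n k x \<and> (Y \<subseteq> abs ` X \<or> abs ` X \<subseteq> Y))"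

end

theory Submission
  imports Defs
begin

text \<open>The graph is connected because the vertex B_n^+ of V_2 is adjacent to every k-subset of
B_n^+, and every vertex Y of V_2 is adjacent to some k-subset (a k-subset of |Y|, or a k-superset
of |Y| inside B_n^+). On the other hand Y = {-x_1, x_2, ..., x_k} is a pendant vertex: it is not a
k-subset of B_n^+, so its neighbours are k-subsets X comparable with |Y| = {x_1, ..., x_k}, i.e.
only X = |Y|. Removing that single neighbour separates Y from B_n^+.\<close>

lemma vertex_connectivity_eq_1:
  assumes "finite V" and "graph_connected V E" and "2 \<le> card V"
    and "c \<in> V" and "\<not> graph_connected (V - {c}) E"
  shows "vertex_connectivity V E = 1"
  unfolding vertex_connectivity_def
proof (rule Least_equality)
  show "\<exists>S. S \<subseteq> V \<and> card S = 1 \<and> (\<not> graph_connected (V - S) E \<or> card (V - S) \<le> 1)"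
    using assms(4,5) by (intro exI[of _ "{c}"]) auto
next
  fix m assume "\<exists>S. S \<subseteq> V \<and> card S = m \<and> (\<not> graph_connected (V - S) E \<or> card (V - S) \<le> 1)"
  then obtain S where "S \<subseteq> V" "card S = m" "\<not> graph_connected (V - S) E \<or> card (V - S) \<le> 1"
    by blast
  moreover have "S \<noteq> {}" using calculation assms(2,3) by auto
  ultimately show "1 \<le> m" using assms(1) by (metis card_0_eq finite_subset less_one not_le)
qed

lemma graph_connected_if_reaches_hub:
  assumes "symp E" and "h \<in> V"
    and "\<And>v. v \<in> V \<Longrightarrow> (\<lambda>a b. a \<in> V \<and> b \<in> V \<and> E a b)\<^sup>*\<^sup>* v h"
  shows "graph_connected V E"
  unfolding graph_connected_def
proof (intro ballI)
  let ?R = "\<lambda>a b. a \<in> V \<and> b \<in> V \<and> E a b"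
  have "symp ?R" using assms(1) by (auto simp: symp_def)
  fix u v assume "u \<in> V" "v \<in> V"
  then have "?R\<^sup>*\<^sup>* u h" and "?R\<^sup>*\<^sup>* h v"
    using assms(3) sympD[OF symp_rtranclp[OF \<open>symp ?R\<close>]] by blast+
  then show "?R\<^sup>*\<^sup>* u v" by (rule rtranclp_trans)
qed

lemma not_graph_connected_remove_only_neighbour:
  assumes "y \<in> V" "z \<in> V" "y \<noteq> z" "y \<noteq> c" "z \<noteq> c"
    and "\<And>w. E y w \<Longrightarrow> w = c"
  shows "\<not> graph_connected (V - {c}) E"
proof
  assume "graph_connected (V - {c}) E"
  then have "(\<lambda>a b. a \<in> V - {c} \<and> b \<in> V - {c} \<and> E a b)\<^sup>*\<^sup>* y z"
    using assms(1-5) unfolding graph_connected_def by blast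
  then show False
    by (cases rule: converse_rtranclpE) (use assms(3,6) in auto)
qed

lemma B_plus_eq: "B_plus n x = x ` {1..n}"
  unfolding B_plus_def by auto

lemma B_set_eq: "B_set n x = x ` {1..n} \<union> uminus ` x ` {1..n - 1}"
  unfolding B_set_def by auto

lemma finite_HB_vertices: "finite (HB_vertices n k x)"
proof -
  have "HB_vertices n k x \<subseteq> Pow (B_set n x)"
    unfolding HB_vertices_def HB_V1_def HB_V2_def phi_B_def B_set_eq B_plus_eq by auto
  then show ?thesis by (rule finite_subset) (simp add: B_set_eq)
qed

lemma symp_HB_adj: "symp (HB_adj n k x)"
  unfolding HB_adj_def by (auto intro: sympI)

lemma abs_image_pos:
  fixes A :: "'a::linordered_idom set"
  assumes "\<And>a. a \<in> A \<Longrightarrow> 0 < a"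
  shows "abs ` A = A"
proof -
  have "abs ` A = id ` A" by (intro image_cong) (simp_all add: assms abs_of_pos)
  then show ?thesis by simp
qed

locale positive_increasing =
  fixes n :: nat and x :: "nat \<Rightarrow> real"
  assumes x_pos: "\<And>i. 1 \<le> i \<Longrightarrow> i \<le> n \<Longrightarrow> 0 < x i"
    and x_less: "\<And>i j. 1 \<le> i \<Longrightarrow> i < j \<Longrightarrow> j \<le> n \<Longrightarrow> x i < x j"
begin

lemma x_le: "1 \<le> i \<Longrightarrow> i \<le> j \<Longrightarrow> j \<le> n \<Longrightarrow> x i \<le> x j"
  using x_less[of i j] by (cases "i = j") auto

lemma inj_on_x: "inj_on x {1..n}"
proof (rule inj_onI)
  fix i j assume "i \<in> {1..n}" "j \<in> {1..n}" "x i = x j"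
  then show "i = j" using x_less[of i j] x_less[of j i] by (cases i j rule: linorder_cases) auto
qed

lemma card_x_image: "m \<le> n \<Longrightarrow> card (x ` {1..m}) = m"
  using inj_on_subset[OF inj_on_x, of "{1..m}"] by (simp add: card_image)

lemma card_B_plus: "card (B_plus n x) = n"
  using card_x_image[of n] by (simp add: B_plus_eq)

lemma abs_B_plus: "abs ` B_plus n x = B_plus n x"
  by (rule abs_image_pos) (auto simp: B_plus_eq x_pos)

lemma neg_x_notin_B_plus:
  assumes "1 \<le> i" "i \<le> n"
  shows "- x i \<notin> B_plus n x"
proof
  assume "- x i \<in> B_plus n x"
  then obtain j where "1 \<le> j" "j \<le> n" "- x i = x j" by (auto simp: B_plus_eq)
  then show False using x_pos[of i] x_pos[of j] assms by simp
qed

lemma abs_image_subset_B_plus: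
  assumes "Y \<subseteq> B_set n x"
  shows "abs ` Y \<subseteq> B_plus n x"
proof
  fix a assume "a \<in> abs ` Y"
  then obtain b where "b \<in> Y" "a = \<bar>b\<bar>" by auto
  then obtain i where "1 \<le> i" "i \<le> n" "b = x i \<or> b = - x i"
    using assms unfolding B_set_def by auto
  then show "a \<in> B_plus n x" using x_pos[of i] \<open>a = \<bar>b\<bar>\<close> by (auto simp: B_plus_eq)
qed

lemma B_plus_in_HB_V2:
  assumes "1 \<le> n" "k < n"
  shows "B_plus n x \<in> HB_V2 n k x"
proof -
  have "x n \<in> B_plus n x" and "\<forall>b\<in>B_plus n x. \<bar>b\<bar> \<le> \<bar>x n\<bar>"
    using assms(1) x_pos x_le by (force simp: B_plus_eq)+
  moreover have "inj_on abs (B_plus n x)"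
    by (rule inj_on_subset[of _ "{0<..}"]) (auto simp: inj_on_def B_plus_eq x_pos)
  ultimately have "B_plus n x \<in> phi_B n x"
    using assms(1) x_pos unfolding phi_B_def by (auto simp: B_plus_eq B_set_eq)
  moreover have "B_plus n x \<notin> HB_V1 n k x"
    using card_B_plus assms(2) unfolding HB_V1_def by simp
  ultimately show ?thesis unfolding HB_V2_def by blast
qed

lemma HB_V2_adj_HB_V1:
  assumes "k \<le> n" "Y \<in> HB_V2 n k x"
  obtains X where "X \<in> HB_V1 n k x" "HB_adj n k x Y X"
proof -
  have absY: "abs ` Y \<subseteq> B_plus n x"
    using assms(2) abs_image_subset_B_plus unfolding HB_V2_def phi_B_def by blast
  have fin: "finite (B_plus n x)" by (simp add: B_plus_eq)
  obtain X where "X \<subseteq> B_plus n x" "card X = k" "X \<subseteq> abs ` Y \<or> abs ` Y \<subseteq> X"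
  proof (cases "k \<le> card (abs ` Y)")
    case True
    then obtain X where "X \<subseteq> abs ` Y" "card X = k" by (metis obtain_subset_with_card_n)
    then show ?thesis using that absY by blast
  next
    case False
    then obtain X where "abs ` Y \<subseteq> X" "X \<subseteq> B_plus n x" "card X = k"
      using exists_subset_between[OF _ _ absY fin, of k] assms(1) card_B_plus by auto
    then show ?thesis using that by blast
  qed
  then show ?thesis using that assms(2) unfolding HB_adj_def HB_V1_def by auto
qed

lemma HB_connected:
  assumes "1 \<le> n" "k < n"
  shows "graph_connected (HB_vertices n k x) (HB_adj n k x)"
proof (rule graph_connected_if_reaches_hub[OF symp_HB_adj])
  let ?V = "HB_vertices n k x" and ?F = "B_plus n x"
  let ?R = "\<lambda>a b. a \<in> ?V \<and> b \<in> ?V \<and> HB_adj n k x a b"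
  have F: "?F \<in> HB_V2 n k x" using B_plus_in_HB_V2[OF assms] .
  then show "?F \<in> ?V" unfolding HB_vertices_def by blast
  have V1_to_F: "?R X ?F" if "X \<in> HB_V1 n k x" for X
  proof -
    have "X \<subseteq> abs ` ?F" using that abs_B_plus unfolding HB_V1_def by simp
    then show ?thesis using that F unfolding HB_adj_def HB_vertices_def by blast
  qed
  fix Y assume "Y \<in> ?V"
  then consider "Y \<in> HB_V1 n k x" | "Y \<in> HB_V2 n k x" unfolding HB_vertices_def by blast
  then show "?R\<^sup>*\<^sup>* Y ?F"
  proof cases
    case 1
    then show ?thesis using V1_to_F by blast
  next
    case 2
    then obtain X where X: "X \<in> HB_V1 n k x" "HB_adj n k x Y X"
      by (rule HB_V2_adj_HB_V1[OF less_imp_le[OF assms(2)]])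
    then have "?R Y X" using 2 unfolding HB_vertices_def by blast
    then show ?thesis
      using V1_to_F[OF X(1)] by (rule converse_rtranclp_into_rtranclp[OF _ r_into_rtranclp])
  qed
qed

definition pendant :: "nat \<Rightarrow> real set" where
  "pendant k = insert (- x 1) (x ` {2..k})"

context
  fixes k :: nat
  assumes k_gt_1: "1 < k" and k_le_n: "k \<le> n"
begin

lemma x_1_pos: "0 < x 1"
  using x_pos k_gt_1 k_le_n by simp

lemma abs_pendant: "abs ` pendant k = x ` {1..k}"
proof -
  have "{1..k} = insert 1 {2..k}" using k_gt_1 by auto
  moreover have "abs ` x ` {2..k} = x ` {2..k}"
    using k_le_n by (intro abs_image_pos) (auto intro: x_pos)
  ultimately show ?thesis using x_1_pos by (simp add: pendant_def)
qed

lemma pendant_in_HB_V2: "pendant k \<in> HB_V2 n k x"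
proof -
  let ?P = "x ` {2..k}"
  have P_pos: "0 < a" if "a \<in> ?P" for a using that x_pos k_le_n by auto
  have "x 1 \<notin> ?P"
  proof
    assume "x 1 \<in> ?P"
    then obtain i where "2 \<le> i" "i \<le> k" "x 1 = x i" by auto
    then show False using x_less[of 1 i] k_le_n by simp
  qed
  have "inj_on abs (pendant k)"
    unfolding pendant_def inj_on_insert
  proof
    show "inj_on abs ?P" using P_pos by (intro inj_onI) (metis abs_of_pos)
    show "\<bar>- x 1\<bar> \<notin> abs ` (?P - {- x 1})"
      using \<open>x 1 \<notin> ?P\<close> x_1_pos abs_image_pos[of ?P] P_pos by auto
  qed
  moreover have "\<forall>b\<in>pendant k. \<bar>b\<bar> \<le> \<bar>x k\<bar>"
  proof
    fix b assume "b \<in> pendant k"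
    then consider "b = - x 1" | i where "2 \<le> i" "i \<le> k" "b = x i" unfolding pendant_def by auto
    then show "\<bar>b\<bar> \<le> \<bar>x k\<bar>"
    proof cases
      case 1
      then show ?thesis using x_le[of 1 k] x_1_pos k_gt_1 k_le_n by simp
    next
      case (2 i)
      then show ?thesis using x_le[of i k] x_pos[of i] k_le_n by simp
    qed
  qed
  moreover have "x k \<in> pendant k" "0 < x k"
    using k_gt_1 k_le_n x_pos unfolding pendant_def by auto
  moreover have "pendant k \<subseteq> B_set n x"
    using k_gt_1 k_le_n unfolding pendant_def B_set_def by force
  ultimately have "pendant k \<in> phi_B n x" unfolding phi_B_def by blast
  moreover have "- x 1 \<notin> B_plus n x" using neg_x_notin_B_plus k_gt_1 k_le_n by simp
  moreover have "- x 1 \<in> pendant k" by (simp add: pendant_def)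
  ultimately show ?thesis unfolding HB_V2_def HB_V1_def by blast
qed

lemma x_image_in_HB_V1: "x ` {1..k} \<in> HB_V1 n k x"
  using k_le_n card_x_image unfolding HB_V1_def B_plus_eq by auto

lemma HB_adj_pendantD:
  assumes "HB_adj n k x (pendant k) Z"
  shows "Z = x ` {1..k}"
proof -
  let ?X = "x ` {1..k}"
  have Z: "Z \<in> HB_V1 n k x" and "Z \<subseteq> ?X \<or> ?X \<subseteq> Z"
    using assms pendant_in_HB_V2 abs_pendant unfolding HB_adj_def HB_V2_def by auto
  moreover have "finite Z" "card Z = k"
    using Z unfolding HB_V1_def B_plus_eq by (auto intro: finite_subset)
  moreover have "finite ?X" "card ?X = k" using card_x_image k_le_n by auto
  ultimately show ?thesis using card_subset_eq[of ?X Z] card_subset_eq[of Z ?X] by auto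
qed

end

end

theorem mainTheorem6:
  fixes n k :: nat and x :: "nat \<Rightarrow> real"
  assumes "n \<ge> 3" and "1 < k" and "k < n"
    and "\<And>i. 1 \<le> i \<Longrightarrow> i \<le> n \<Longrightarrow> x i > 0"
    and "\<And>i j. 1 \<le> i \<Longrightarrow> i < j \<Longrightarrow> j \<le> n \<Longrightarrow> x i < x j"
  shows "vertex_connectivity (HB_vertices n k x) (HB_adj n k x) = 1"
proof -
  interpret positive_increasing n x using assms(4,5) by unfold_locales
  have "1 \<le> n" "k \<le> n" using assms(1,3) by auto
  let ?V = "HB_vertices n k x" and ?E = "HB_adj n k x"
  let ?Y = "pendant k" and ?X = "x ` {1..k}" and ?F = "B_plus n x"
  have Y: "?Y \<in> HB_V2 n k x" by (rule pendant_in_HB_V2[OF assms(2) \<open>k \<le> n\<close>])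
  have X: "?X \<in> HB_V1 n k x" by (rule x_image_in_HB_V1[OF assms(2) \<open>k \<le> n\<close>])
  have F: "?F \<in> HB_V2 n k x" by (rule B_plus_in_HB_V2[OF \<open>1 \<le> n\<close> assms(3)])
  have vertices: "?Y \<in> ?V" "?X \<in> ?V" "?F \<in> ?V" using X Y F unfolding HB_vertices_def by auto
  have "?Y \<noteq> ?X" "?F \<noteq> ?X" using X Y F unfolding HB_V2_def by auto
  moreover have "?Y \<noteq> ?F" using neg_x_notin_B_plus[of 1] \<open>1 \<le> n\<close> by (auto simp: pendant_def)
  ultimately have "\<not> graph_connected (?V - {?X}) ?E"
    using vertices HB_adj_pendantD[OF assms(2) \<open>k \<le> n\<close>]
    by (intro not_graph_connected_remove_only_neighbour[of ?Y _ ?F]) auto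
  moreover have "2 \<le> card ?V"
    using card_mono[OF finite_HB_vertices[of n k x], of "{?Y, ?X}"] vertices \<open>?Y \<noteq> ?X\<close> by simp
  ultimately show ?thesis
    using finite_HB_vertices HB_connected[OF \<open>1 \<le> n\<close> assms(3)] vertices(2)
    by (intro vertex_connectivity_eq_1)
qed

end
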